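(* Let $X$ be an infinite compact metrizable space, $h\colon X\to X$ a minimal homeomorphism, and suppose $(X,h)$ has the topological small boundary property. Then for any $N\in\mathbb{N}$ there exists a closed set $Y\subset X$ such that $\mathrm{int}(Y)\neq\varnothing$, $\overline{\mathrm{int}(Y)}=Y$, $\partial Y$ is topologically $h$-small, and the sets $Y,h(Y),\dots,h^N(Y)$ are pairwise disjoint.
   Context: $\partial A$ is the boundary of $A$. A closed set $F\subset X$ is topologically $h$-small if there is $m\in\mathbb{Z}_{+}$ such that whenever $d(0),\dots,d(m)$ are $m+1$ distinct integers, $h^{d(0)}(F)\cap\cdots\cap h^{d(m)}(F)=\varnothing$. $(X,h)$ has the topological small boundary property if whenever $F,K\subset X$ are disjoint compact sets, there exist open sets $U,V\subset X$ with $F\subset U$, $K\subset V$, $\overline{U}\cap\overline{V}=\varnothing$ and $\partial U$ topologically $h$-small. *)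

theory Defs
  imports "HOL-Analysis.Analysis"
begin

definition zpow :: "('a \<Rightarrow> 'a) \<Rightarrow> int \<Rightarrow> 'a \<Rightarrow> 'a" where
  "zpow h d = (if 0 \<le> d then h ^^ nat d else (inv h) ^^ nat (- d))"

definition is_homeo :: "('a::topological_space \<Rightarrow> 'a) \<Rightarrow> bool" where
  "is_homeo h \<longleftrightarrow> (\<exists>g. homeomorphism UNIV UNIV h g)"

definition minimal_homeo :: "('a::topological_space \<Rightarrow> 'a) \<Rightarrow> bool" where
  "minimal_homeo h \<longleftrightarrow> is_homeo h \<and>
     (\<forall>Z. closed Z \<and> h ` Z = Z \<longrightarrow> Z = {} \<or> Z = UNIV)"

definition top_small :: "('a::topological_space \<Rightarrow> 'a) \<Rightarrow> 'a set \<Rightarrow> bool" where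
  "top_small h F \<longleftrightarrow> closed F \<and> (\<exists>m::nat. \<forall>d::nat \<Rightarrow> int.
      inj_on d {0..m} \<longrightarrow> (\<Inter>i\<in>{0..m}. zpow h (d i) ` F) = {})"

definition small_boundary_prop :: "('a::topological_space \<Rightarrow> 'a) \<Rightarrow> bool" where
  "small_boundary_prop h \<longleftrightarrow> (\<forall>F K. compact F \<and> compact K \<and> F \<inter> K = {} \<longrightarrow>
     (\<exists>U V. open U \<and> open V \<and> F \<subseteq> U \<and> K \<subseteq> V \<and> closure U \<inter> closure V = {}
            \<and> top_small h (frontier U)))"

end

theory Submission
  imports Defs
begin

text \<open>A point x of an infinite minimal system is not periodic, so x, h x, ..., h^N x are distinct,
  and by continuity some open W \<ni> x has pairwise disjoint images h^i W, i \<le> N. The small boundary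
  property separates {x} from the complement of W by an open U with topologically small frontier;
  Y = closure U is then regular closed, lies in W, and its frontier is contained in that of U.\<close>

lemma top_small_subset:
  assumes "top_small h F" and "closed G" and "G \<subseteq> F"
  shows "top_small h G"
proof -
  obtain m where m: "\<forall>d::nat \<Rightarrow> int. inj_on d {0..m} \<longrightarrow> (\<Inter>i\<in>{0..m}. zpow h (d i) ` F) = {}"
    using assms(1) unfolding top_small_def by blast
  have "\<forall>d::nat \<Rightarrow> int. inj_on d {0..m} \<longrightarrow> (\<Inter>i\<in>{0..m}. zpow h (d i) ` G) = {}"
  proof (intro allI impI)
    fix d :: "nat \<Rightarrow> int"
    assume "inj_on d {0..m}"
    then have "(\<Inter>i\<in>{0..m}. zpow h (d i) ` F) = {}"
      using m by blast
    moreover have "(\<Inter>i\<in>{0..m}. zpow h (d i) ` G) \<subseteq> (\<Inter>i\<in>{0..m}. zpow h (d i) ` F)"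
      using assms(3) by blast
    ultimately show "(\<Inter>i\<in>{0..m}. zpow h (d i) ` G) = {}"
      by blast
  qed
  then show ?thesis
    using assms(2) unfolding top_small_def by blast
qed

lemma frontier_closure_subset: "frontier (closure S) \<subseteq> frontier S"
  unfolding frontier_def using interior_mono[OF closure_subset, of S] by auto

lemma closure_interior_closure_open:
  assumes "open U"
  shows "closure (interior (closure U)) = closure U"
  by (metis assms closure_closure closure_mono closure_subset interior_maximal interior_subset
      subset_antisym)

lemma continuous_on_funpow:
  fixes f :: "'a::topological_space \<Rightarrow> 'a"
  assumes "continuous_on UNIV f"
  shows "continuous_on UNIV (f ^^ n)"
proof (induction n)
  case (Suc n)
  then show ?case
    using continuous_on_compose[OF Suc, of f] assms by (simp add: continuous_on_subset)
qed (simp add: continuous_on_id)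

lemma open_nbhd_pairwise_disjoint_images:
  fixes f :: "'i \<Rightarrow> 'a::topological_space \<Rightarrow> 'b::t2_space"
  assumes "finite I" and cont: "\<And>i. i \<in> I \<Longrightarrow> continuous_on UNIV (f i)"
    and "inj_on (\<lambda>i. f i x) I"
  shows "\<exists>W. open W \<and> x \<in> W \<and> (\<forall>i\<in>I. \<forall>j\<in>I. i \<noteq> j \<longrightarrow> f i ` W \<inter> f j ` W = {})"
proof -
  define P where "P = {(i, j). i \<in> I \<and> j \<in> I \<and> i \<noteq> j}"
  have "\<forall>p. \<exists>S. p \<in> P \<longrightarrow> open (fst S) \<and> open (snd S) \<and> f (fst p) x \<in> fst S
            \<and> f (snd p) x \<in> snd S \<and> fst S \<inter> snd S = {}"
    using assms(3) by (force simp: P_def inj_on_def separation_t2)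
  then obtain S where S: "\<And>p. p \<in> P \<Longrightarrow> open (fst (S p)) \<and> open (snd (S p))
      \<and> f (fst p) x \<in> fst (S p) \<and> f (snd p) x \<in> snd (S p) \<and> fst (S p) \<inter> snd (S p) = {}"
    by metis
  define W where "W = (\<Inter>p\<in>P. f (fst p) -` fst (S p) \<inter> f (snd p) -` snd (S p))"
  have "finite P"
    by (rule finite_subset[of _ "I \<times> I"]) (auto simp: P_def \<open>finite I\<close>)
  then have "open W"
    unfolding W_def using S cont by (auto simp: P_def intro!: open_Int open_vimage)
  moreover have "x \<in> W"
    using S by (auto simp: W_def)
  moreover have "f i ` W \<inter> f j ` W = {}" if "i \<in> I" "j \<in> I" "i \<noteq> j" for i j
  proof -
    have "(i, j) \<in> P" using that by (simp add: P_def)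
    then have "f i ` W \<subseteq> fst (S (i, j))" "f j ` W \<subseteq> snd (S (i, j))"
      unfolding W_def by fastforce+
    then show ?thesis using S[OF \<open>(i, j) \<in> P\<close>] by blast
  qed
  ultimately show ?thesis by blast
qed

lemma periodic_orbit_finite_invariant:
  assumes "(h ^^ p) x = x" and "0 < p"
  defines "Z \<equiv> range (\<lambda>k. (h ^^ k) x)"
  shows "finite Z" and "h ` Z = Z"
proof -
  have "(h ^^ k) x \<in> (\<lambda>k. (h ^^ k) x) ` {..<p}" for k
    using funpow_mod_eq[OF assms(1), where m=k] assms(2)
    by (metis lessThan_iff mod_less_divisor rev_image_eqI)
  then have "Z = (\<lambda>k. (h ^^ k) x) ` {..<p}"
    unfolding Z_def by auto
  then show "finite Z" by simp
  have "h ` Z = range (\<lambda>k. (h ^^ Suc k) x)"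
    by (simp add: Z_def image_image)
  also have "\<dots> = Z"
  proof
    show "range (\<lambda>k. (h ^^ Suc k) x) \<subseteq> Z" unfolding Z_def by (blast intro: range_eqI)
    have "(h ^^ Suc (k + p - 1)) x = (h ^^ k) ((h ^^ p) x)" for k
      using \<open>0 < p\<close> by (simp add: funpow_add)
    then have "(h ^^ k) x \<in> range (\<lambda>k. (h ^^ Suc k) x)" for k
      using assms(1) by (metis rangeI)
    then show "Z \<subseteq> range (\<lambda>k. (h ^^ Suc k) x)"
      unfolding Z_def by blast
  qed
  finally show "h ` Z = Z" .
qed

lemma minimal_homeo_aperiodic:
  assumes "infinite (UNIV :: 'a::t1_space set)" and "minimal_homeo (h :: 'a \<Rightarrow> 'a)"
    and "0 < p"
  shows "(h ^^ p) x \<noteq> x"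
proof
  assume "(h ^^ p) x = x"
  define Z where "Z = range (\<lambda>k. (h ^^ k) x)"
  have "finite Z" "h ` Z = Z"
    using periodic_orbit_finite_invariant[OF \<open>(h ^^ p) x = x\<close> \<open>0 < p\<close>] by (simp_all add: Z_def)
  moreover have "closed Z"
    using \<open>finite Z\<close> by (rule finite_imp_closed)
  ultimately have "Z = {} \<or> Z = UNIV"
    using assms(2) unfolding minimal_homeo_def by blast
  moreover have "Z \<noteq> {}"
    by (simp add: Z_def)
  ultimately show False
    using \<open>finite Z\<close> assms(1) by auto
qed

lemma minimal_homeo_orbit_inj:
  assumes "infinite (UNIV :: 'a::t1_space set)" and "minimal_homeo (h :: 'a \<Rightarrow> 'a)"
  shows "inj (\<lambda>n. (h ^^ n) x)"
proof (rule linorder_injI)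
  fix i j :: nat assume "i < j"
  then have "(h ^^ (j - i)) ((h ^^ i) x) = (h ^^ j) x"
    by (metis funpow_add o_apply le_add_diff_inverse2 less_imp_le)
  then show "(h ^^ i) x \<noteq> (h ^^ j) x"
    using minimal_homeo_aperiodic[OF assms, of "j - i" "(h ^^ i) x"] \<open>i < j\<close> by auto
qed

lemma small_boundary_prop_regular_closed_nbhd:
  assumes "compact (UNIV :: 'a::topological_space set)" and "small_boundary_prop (h :: 'a \<Rightarrow> 'a)"
    and "open W" and "x \<in> W"
  obtains Y where "closed Y" and "x \<in> interior Y" and "closure (interior Y) = Y" and "Y \<subseteq> W"
    and "top_small h (frontier Y)"
proof -
  have "compact (- W)"
    using closed_Int_compact[of "- W" UNIV] assms(1,3) by (simp add: closed_Compl)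
  moreover have "compact {x}" and "{x} \<inter> - W = {}"
    using assms(4) by auto
  ultimately obtain U V where UV: "open U" "open V" "{x} \<subseteq> U" "- W \<subseteq> V"
    "closure U \<inter> closure V = {}" "top_small h (frontier U)"
    using assms(2) unfolding small_boundary_prop_def by meson
  show ?thesis
  proof (rule that)
    show "closed (closure U)"
      by simp
    have "U \<subseteq> interior (closure U)"
      by (simp add: UV(1) closure_subset interior_maximal)
    then show "x \<in> interior (closure U)"
      using UV(3) by blast
    show "closure (interior (closure U)) = closure U"
      using closure_interior_closure_open[OF UV(1)] .
    show "closure U \<subseteq> W"
      using UV(4,5) closure_subset[of V] by blast
    show "top_small h (frontier (closure U))"
      using top_small_subset[OF UV(6) frontier_closed frontier_closure_subset] .
  qed
qed

theorem lemma5p4: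
  fixes h :: "'a::metric_space \<Rightarrow> 'a" and N :: nat
  assumes "compact (UNIV :: 'a set)"
    and "infinite (UNIV :: 'a set)"
    and "minimal_homeo h"
    and "small_boundary_prop h"
  shows "\<exists>Y. closed Y \<and> interior Y \<noteq> {} \<and> closure (interior Y) = Y
           \<and> top_small h (frontier Y)
           \<and> (\<forall>i\<le>N. \<forall>j\<le>N. i \<noteq> j \<longrightarrow> (h ^^ i) ` Y \<inter> (h ^^ j) ` Y = {})"
proof -
  fix x :: 'a
  have "continuous_on UNIV h"
    using assms(3) unfolding minimal_homeo_def is_homeo_def by (metis homeomorphism_cont1)
  moreover have "inj_on (\<lambda>i. (h ^^ i) x) {..N}"
    using minimal_homeo_orbit_inj[OF assms(2,3)] by (rule inj_on_subset) simp
  ultimately have "\<exists>W. open W \<and> x \<in> W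
      \<and> (\<forall>i\<in>{..N}. \<forall>j\<in>{..N}. i \<noteq> j \<longrightarrow> (h ^^ i) ` W \<inter> (h ^^ j) ` W = {})"
    by (intro open_nbhd_pairwise_disjoint_images) (simp_all add: continuous_on_funpow)
  then obtain W where "open W" "x \<in> W"
    and W: "\<forall>i\<in>{..N}. \<forall>j\<in>{..N}. i \<noteq> j \<longrightarrow> (h ^^ i) ` W \<inter> (h ^^ j) ` W = {}"
    by blast
  obtain Y where "closed Y" "x \<in> interior Y" "closure (interior Y) = Y" "Y \<subseteq> W"
    "top_small h (frontier Y)"
    using small_boundary_prop_regular_closed_nbhd[OF assms(1,4) \<open>open W\<close> \<open>x \<in> W\<close>] .
  moreover have "interior Y \<noteq> {}"
    using \<open>x \<in> interior Y\<close> by blast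
  moreover have "\<forall>i\<le>N. \<forall>j\<le>N. i \<noteq> j \<longrightarrow> (h ^^ i) ` Y \<inter> (h ^^ j) ` Y = {}"
    using W \<open>Y \<subseteq> W\<close> by (metis atMost_iff image_mono inf_mono subset_empty)
  ultimately show ?thesis
    by blast
qed

end
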